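(* Let $A$ be an arena and $\sigma$ a view function on $A$. Then its view closure $\overline{\sigma}$ is a strategy on $A$ (a non-empty set of even-length plays, closed under even-length prefixes, deterministic and uniform).
   Context: First-order variables are split into three disjoint countable sets: $\mathcal A$-variables, $\mathcal O$-variables (with a fixed enumeration $(o_i)_{i\in\mathbb N}$) and $\mathcal P$-variables. $\mathcal{AP}$-terms (resp. $\mathcal{OP}$-terms) are first-order terms built from $\mathcal A$- and $\mathcal P$-variables (resp. $\mathcal O$- and $\mathcal P$-variables). Arena: a finite forest whose nodes (moves) carry a first-order label (a list of $\mathcal A$-variables, all such variables in the arena being distinct) and an atomic label (a list of atomic formulas $X\,t_1\dots t_k$ whose $t_i$ are $\mathcal{AP}$-terms whose $\mathcal A$-variables occur in the first-order label of the node or of an ancestor). Polarity is depth parity: even = Opponent (O), odd = Player (P); roots are initial. Justified sequence: finite sequence of move occurrences; each non-initial occurrence has a $\lambda$-pointer to an earlier occurrence of its father; each element of the atomic label of an occurrence has at most one $\mu$-pointer to an element of the atomic label of an earlier occurrence of opposite polarity. Instantiations: each O-move occurrence carries an $\mathcal O$-instantiation (list of $\mathcal O$-variables of the length of its first-order label), each P-move occurrence a $\mathcal P$-instantiation (list of $\mathcal{OP}$-terms of that length); all $\mathcal O$-variables in $\mathcal O$-instantiations are distinct. For an occurrence $m$ with instantiation $[t_1..t_k]$ and first-order label $[x_1..x_k]$, $\theta_m=\{x_i\mapsto t_i\}$ if $m$ is initial, else $\theta_m=\theta_n\cup\{x_i\mapsto t_i\}$ with $n$ its $\lambda$-justifier.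 Play: an instantiated justified sequence with alternating polarities, no $\mu$-pointers from O-moves, exactly one $\mu$-pointer from each element of the atomic label of each P-move, every $\mu$-pointer from $X\,t_1..t_k$ at $m$ to $Y\,u_1..u_p$ at $n$ satisfying $X=Y$, $k=p$, $t_i\theta_m=u_i\theta_n$, and every $\mathcal O$-variable occurring in a $\mathcal P$-instantiation occurring in an earlier $\mathcal O$-instantiation. An $\mathcal O$-renaming is an injection $\varsigma$ of $\mathcal O$-variables into themselves; $s\varsigma$ replaces each $o$ by $\varsigma(o)$ in all instantiations. Strategy: non-empty set of even-length plays closed under even-length prefixes, deterministic ($sm,sn\in\sigma\Rightarrow sm=sn$, including pointers and instantiations) and uniform ($s\in\sigma\Rightarrow s\varsigma\in\sigma$ for every $\mathcal O$-renaming). View: a play in which each O-move occurrence other than the first is $\lambda$-justified by the immediately preceding move, and the concatenation (in order) of its $\mathcal O$-instantiations is a prefix of $(o_i)$. Pre-view: $\lceil\varepsilon\rceil=\varepsilon$; $\lceil sm\rceil=\lceil s\rceil m$ for P-moves $m$; $\lceil sm\rceil=m$ for initial $m$; $\lceil sm\,t\,n\rceil=\lceil sm\rceil n$ for an O-move $n$ justified by $m$. The view $\ulcorner s\urcorner$ is $\lceil s\rceil\varsigma$ where $\varsigma$ is an $\mathcal O$-renaming sending the $i$-th $\mathcal O$-variable played in $\lceil s\rceil$ to $o_i$. View function: non-empty set of even-length views closed under even-length prefixes and deterministic. View closure $\overline\sigma$: least set with $\varepsilon\in\overline\sigma$ and, if $s\in\overline\sigma$, $smn$ is a play and $\ulcorner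 smn\urcorner\in\sigma$, then $smn\in\overline\sigma$. *)

theory Defs
  imports Main
begin

text \<open>First-order variables: A-variables, O-variables (o_i = OV i) and P-variables.\<close>
datatype var = AV nat | OV nat | PV nat

datatype trm = Var var | Fn nat "trm list"

text \<open>Atomic formula X t1 .. tk : predicate symbol X (nat) with argument list.\<close>
type_synonym atom = "nat \<times> trm list"

fun A_var :: "var \<Rightarrow> bool" where
  "A_var (AV _) = True" | "A_var _ = False"
fun O_var :: "var \<Rightarrow> bool" where
  "O_var (OV _) = True" | "O_var _ = False"
fun P_var :: "var \<Rightarrow> bool" where
  "P_var (PV _) = True" | "P_var _ = False"

fun tvars :: "trm \<Rightarrow> var set" where
  "tvars (Var x) = {x}"
| "tvars (Fn f ts) = (\<Union>t\<in>set ts. tvars t)"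

definition AP_term :: "trm \<Rightarrow> bool" where
  "AP_term t \<longleftrightarrow> (\<forall>x\<in>tvars t. A_var x \<or> P_var x)"

definition OP_term :: "trm \<Rightarrow> bool" where
  "OP_term t \<longleftrightarrow> (\<forall>x\<in>tvars t. O_var x \<or> P_var x)"

fun subst :: "(var \<rightharpoonup> trm) \<Rightarrow> trm \<Rightarrow> trm" where
  "subst \<theta> (Var x) = (case \<theta> x of Some t \<Rightarrow> t | None \<Rightarrow> Var x)"
| "subst \<theta> (Fn f ts) = Fn f (map (subst \<theta>) ts)"

fun oren :: "(nat \<Rightarrow> nat) \<Rightarrow> trm \<Rightarrow> trm" where
  "oren \<zeta> (Var (OV i)) = Var (OV (\<zeta> i))"
| "oren \<zeta> (Var x) = Var x"
| "oren \<zeta> (Fn f ts) = Fn f (map (oren \<zeta>) ts)"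

record 'm arena =
  amoves :: "'m set"
  apar   :: "'m \<Rightarrow> 'm option"
  afol   :: "'m \<Rightarrow> var list"
  aatl   :: "'m \<Rightarrow> atom list"

inductive has_depth :: "'m arena \<Rightarrow> 'm \<Rightarrow> nat \<Rightarrow> bool" for A where
  root: "apar A m = None \<Longrightarrow> has_depth A m 0"
| step: "apar A m = Some n \<Longrightarrow> has_depth A n d \<Longrightarrow> has_depth A m (Suc d)"

definition O_move :: "'m arena \<Rightarrow> 'm \<Rightarrow> bool" where
  "O_move A m \<longleftrightarrow> (\<exists>d. has_depth A m d \<and> even d)"

definition ancestor_or_self :: "'m arena \<Rightarrow> 'm \<Rightarrow> 'm \<Rightarrow> bool" where
  "ancestor_or_self A m n \<longleftrightarrow> (\<lambda>x y. apar A x = Some y)\<^sup>*\<^sup>* m n"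

definition arena :: "'m arena \<Rightarrow> bool" where
  "arena A \<longleftrightarrow>
     finite (amoves A)
   \<and> (\<forall>m\<in>amoves A. \<forall>n. apar A m = Some n \<longrightarrow> n \<in> amoves A)
   \<and> (\<forall>m\<in>amoves A. \<exists>d. has_depth A m d)
   \<and> (\<forall>m\<in>amoves A. (\<forall>x\<in>set (afol A m). A_var x) \<and> distinct (afol A m))
   \<and> (\<forall>m\<in>amoves A. \<forall>m'\<in>amoves A. m \<noteq> m' \<longrightarrow> set (afol A m) \<inter> set (afol A m') = {})
   \<and> (\<forall>m\<in>amoves A. \<forall>a\<in>set (aatl A m). \<forall>t\<in>set (snd a).
        AP_term t \<and>
        (\<forall>x\<in>tvars t. A_var x \<longrightarrow> (\<exists>n. ancestor_or_self A m n \<and> x \<in> set (afol A n))))"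

text \<open>A move occurrence: the move, its lambda-pointer (index of an earlier occurrence),
  for each element of the atomic label an optional mu-pointer
  (index of earlier occurrence, index of atom in its atomic label), and its instantiation.\<close>
record 'm occ =
  omv  :: 'm
  olp  :: "nat option"
  omp  :: "(nat \<times> nat) option list"
  oins :: "trm list"

definition oinsts :: "'m arena \<Rightarrow> 'm occ list \<Rightarrow> trm list" where
  "oinsts A s = concat (map oins (filter (\<lambda>x. O_move A (omv x)) s))"

definition justified :: "'m arena \<Rightarrow> 'm occ list \<Rightarrow> bool" where
  "justified A s \<longleftrightarrow>
     (\<forall>i<length s.
        omv (s!i) \<in> amoves A
      \<and> (if apar A (omv (s!i)) = None then olp (s!i) = None
         else (\<exists>j<i. olp (s!i) = Some j \<and> apar A (omv (s!i)) = Some (omv (s!j))))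
      \<and> length (omp (s!i)) = length (aatl A (omv (s!i)))
      \<and> (\<forall>k<length (omp (s!i)). \<forall>j l. omp (s!i) ! k = Some (j, l) \<longrightarrow>
            j < i \<and> l < length (aatl A (omv (s!j)))
            \<and> O_move A (omv (s!j)) \<noteq> O_move A (omv (s!i)))
      \<and> length (oins (s!i)) = length (afol A (omv (s!i)))
      \<and> (if O_move A (omv (s!i)) then (\<forall>t\<in>set (oins (s!i)). \<exists>k. t = Var (OV k))
         else (\<forall>t\<in>set (oins (s!i)). OP_term t)))
   \<and> distinct (oinsts A s)"

text \<open>theta_m, computed along lambda-pointers (fuel suffices since pointers go strictly back).\<close>
primrec thaux :: "nat \<Rightarrow> 'm arena \<Rightarrow> 'm occ list \<Rightarrow> nat \<Rightarrow> (var \<rightharpoonup> trm)" where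
  "thaux 0 A s i = Map.empty"
| "thaux (Suc f) A s i =
     (case olp (s!i) of None \<Rightarrow> Map.empty | Some j \<Rightarrow> thaux f A s j)
     ++ map_of (zip (afol A (omv (s!i))) (oins (s!i)))"

definition theta :: "'m arena \<Rightarrow> 'm occ list \<Rightarrow> nat \<Rightarrow> (var \<rightharpoonup> trm)" where
  "theta A s i = thaux (Suc i) A s i"

definition play :: "'m arena \<Rightarrow> 'm occ list \<Rightarrow> bool" where
  "play A s \<longleftrightarrow>
     justified A s
   \<and> (\<forall>i. Suc i < length s \<longrightarrow> O_move A (omv (s!i)) \<noteq> O_move A (omv (s!Suc i)))
   \<and> (\<forall>i<length s. O_move A (omv (s!i)) \<longrightarrow> (\<forall>p\<in>set (omp (s!i)). p = None))
   \<and> (\<forall>i<length s. \<not> O_move A (omv (s!i)) \<longrightarrow> (\<forall>p\<in>set (omp (s!i)). p \<noteq> None))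
   \<and> (\<forall>i<length s. \<forall>k<length (omp (s!i)). \<forall>j l. omp (s!i) ! k = Some (j, l) \<longrightarrow>
        fst (aatl A (omv (s!i)) ! k) = fst (aatl A (omv (s!j)) ! l)
      \<and> length (snd (aatl A (omv (s!i)) ! k)) = length (snd (aatl A (omv (s!j)) ! l))
      \<and> map (subst (theta A s i)) (snd (aatl A (omv (s!i)) ! k))
          = map (subst (theta A s j)) (snd (aatl A (omv (s!j)) ! l)))
   \<and> (\<forall>i<length s. \<not> O_move A (omv (s!i)) \<longrightarrow>
        (\<forall>t\<in>set (oins (s!i)). \<forall>k. OV k \<in> tvars t \<longrightarrow>
           (\<exists>j<i. O_move A (omv (s!j)) \<and> Var (OV k) \<in> set (oins (s!j)))))"

definition oren_seq :: "(nat \<Rightarrow> nat) \<Rightarrow> 'm occ list \<Rightarrow> 'm occ list" where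
  "oren_seq \<zeta> s = map (\<lambda>x. x\<lparr>oins := map (oren \<zeta>) (oins x)\<rparr>) s"

definition strategy :: "'m arena \<Rightarrow> 'm occ list set \<Rightarrow> bool" where
  "strategy A \<sigma> \<longleftrightarrow>
     \<sigma> \<noteq> {}
   \<and> (\<forall>s\<in>\<sigma>. play A s \<and> even (length s))
   \<and> (\<forall>s\<in>\<sigma>. \<forall>n. even n \<and> n \<le> length s \<longrightarrow> take n s \<in> \<sigma>)
   \<and> (\<forall>s m n. s @ [m] \<in> \<sigma> \<and> s @ [n] \<in> \<sigma> \<longrightarrow> m = n)
   \<and> (\<forall>\<zeta> s. inj \<zeta> \<and> s \<in> \<sigma> \<longrightarrow> oren_seq \<zeta> s \<in> \<sigma>)"

definition is_view :: "'m arena \<Rightarrow> 'm occ list \<Rightarrow> bool" where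
  "is_view A s \<longleftrightarrow>
     play A s
   \<and> (\<forall>i<length s. 0 < i \<and> O_move A (omv (s!i)) \<longrightarrow> olp (s!i) = Some (i - 1))
   \<and> oinsts A s = map (\<lambda>i. Var (OV i)) [0..<length (oinsts A s)]"

definition view_function :: "'m arena \<Rightarrow> 'm occ list set \<Rightarrow> bool" where
  "view_function A \<sigma> \<longleftrightarrow>
     \<sigma> \<noteq> {}
   \<and> (\<forall>s\<in>\<sigma>. is_view A s \<and> even (length s))
   \<and> (\<forall>s\<in>\<sigma>. \<forall>n. even n \<and> n \<le> length s \<longrightarrow> take n s \<in> \<sigma>)
   \<and> (\<forall>s m n. s @ [m] \<in> \<sigma> \<and> s @ [n] \<in> \<sigma> \<longrightarrow> m = n)"

text \<open>Indices (in s) of the occurrences forming the pre-view of the prefix of length n.\<close>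
primrec pvaux :: "nat \<Rightarrow> 'm arena \<Rightarrow> 'm occ list \<Rightarrow> nat \<Rightarrow> nat list" where
  "pvaux 0 A s n = []"
| "pvaux (Suc f) A s n =
     (case n of 0 \<Rightarrow> []
      | Suc k \<Rightarrow>
          if \<not> O_move A (omv (s!k)) then pvaux f A s k @ [k]
          else if apar A (omv (s!k)) = None then [k]
          else (case olp (s!k) of
                  Some j \<Rightarrow> if j < k then pvaux f A s (Suc j) @ [k] else [k]
                | None \<Rightarrow> [k]))"

definition pos :: "nat list \<Rightarrow> nat \<Rightarrow> nat" where
  "pos I j = length (takeWhile (\<lambda>x. x \<noteq> j) I)"

text \<open>Re-indexing pointers into the subsequence given by I; pointers to removed
  occurrences become absent (so the result is then not a justified sequence).\<close>
definition reidx :: "nat list \<Rightarrow> 'm occ \<Rightarrow> 'm occ" where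
  "reidx I x = x\<lparr>olp := (case olp x of None \<Rightarrow> None
                           | Some j \<Rightarrow> if j \<in> set I then Some (pos I j) else None),
                 omp := map (\<lambda>p. case p of None \<Rightarrow> None
                           | Some (j, l) \<Rightarrow> if j \<in> set I then Some (pos I j, l) else None) (omp x)\<rparr>"

definition subseq_at :: "'m occ list \<Rightarrow> nat list \<Rightarrow> 'm occ list" where
  "subseq_at s I = map (\<lambda>i. reidx I (s!i)) I"

definition preview :: "'m arena \<Rightarrow> 'm occ list \<Rightarrow> 'm occ list" where
  "preview A s = subseq_at s (pvaux (length s) A s (length s))"

definition oidx :: "'m arena \<Rightarrow> 'm occ list \<Rightarrow> nat list" where
  "oidx A s = map (\<lambda>t. case t of Var (OV k) \<Rightarrow> k | _ \<Rightarrow> 0) (oinsts A s)"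

text \<open>An O-renaming sending the i-th O-variable played to o_i (injective whenever these
  variables are distinct, as they are in a play).\<close>
definition view_ren :: "nat list \<Rightarrow> nat \<Rightarrow> nat" where
  "view_ren vs x = (if x \<in> set vs then pos vs x else length vs + x)"

definition view_of :: "'m arena \<Rightarrow> 'm occ list \<Rightarrow> 'm occ list" where
  "view_of A s = oren_seq (view_ren (oidx A (preview A s))) (preview A s)"

inductive_set vclos :: "'m arena \<Rightarrow> 'm occ list set \<Rightarrow> 'm occ list set"
  for A :: "'m arena" and \<sigma> :: "'m occ list set" where
  empty: "[] \<in> vclos A \<sigma>"
| ext: "s \<in> vclos A \<sigma> \<Longrightarrow> play A (s @ [m, n]) \<Longrightarrow> view_of A (s @ [m, n]) \<in> \<sigma>
        \<Longrightarrow> s @ [m, n] \<in> vclos A \<sigma>"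

end

theory Submission
  imports Defs
begin

(* Non-emptiness, even length, being a play and closure under even prefixes are immediate
   from the inductive definition of vclos: every step adds an O-move and a P-move to a play.
   The two substantial properties are uniformity and determinism.

   An injective O-renaming z maps plays to plays: the justification structure is
   untouched, and since the atomic labels of an arena contain no O-variables, renaming
   commutes with the substitutions theta used in the mu-pointer condition.  Moreover z does
   not change the view of a play, because the view already renames the O-variables of the
   pre-view canonically to o_0, o_1, ...; so every step of the inductive definition survives
   the renaming.

   In s @ [m] and s @ [n] the last moves are P-moves (polarity alternates).
   The view of t @ [b], for a P-move b, is a prefix depending only on t followed by b with its
   pointers re-indexed into the pre-view and its instantiation renamed.  Determinism of the
   view function identifies these last elements, and re-indexing plus renaming is injective on
   P-moves whose pointers all survive in the view, which they do since the view is a play. *)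

fun vren :: "(nat \<Rightarrow> nat) \<Rightarrow> var \<Rightarrow> var" where
  "vren z (OV k) = OV (z k)"
| "vren z x = x"

lemma oren_Var [simp]: "oren z (Var x) = Var (vren z x)"
  by (cases x) auto

lemma vren_kind [simp]: "O_var (vren z x) = O_var x" "P_var (vren z x) = P_var x"
  by (cases x; simp)+

lemma inj_vren:
  assumes "inj z"
  shows "inj (vren z)"
proof (rule injI)
  fix x y
  show "vren z x = vren z y \<Longrightarrow> x = y"
    using assms by (cases x; cases y) (auto dest: injD)
qed

lemma tvars_oren: "tvars (oren z t) = vren z ` tvars t"
  by (induction t) auto

lemma OP_term_oren: "OP_term t \<Longrightarrow> OP_term (oren z t)"
  by (auto simp: OP_term_def tvars_oren)

lemma inj_oren:
  assumes "inj z"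
  shows "inj (oren z)"
proof (rule injI)
  fix t u :: trm
  show "oren z t = oren z u \<Longrightarrow> t = u"
  proof (induction t arbitrary: u)
    case (Var x)
    then show ?case using inj_vren[OF assms] by (cases u) (auto dest: injD)
  next
    case (Fn f ts)
    then show ?case by (cases u) (auto simp: list_eq_iff_nth_eq dest!: nth_mem)
  qed
qed

lemma oren_eq_OV:
  assumes "oren z u = Var (OV k)"
  shows "\<exists>k'. u = Var (OV k') \<and> k = z k'"
proof (cases u)
  case (Var x)
  then show ?thesis using assms by (cases x) auto
qed (use assms in simp)

lemma OV_in_tvars_oren:
  assumes "OV k \<in> tvars (oren z t)"
  shows "\<exists>k'. k = z k' \<and> OV k' \<in> tvars t"
proof -
  obtain x where "x \<in> tvars t" "OV k = vren z x"
    using assms by (auto simp: tvars_oren)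
  then show ?thesis by (cases x) auto
qed

lemma oren_comp: "oren f (oren g t) = oren (f \<circ> g) t"
proof (induction t)
  case (Var x) then show ?case by (cases x) auto
qed auto

lemma oren_cong: "(\<And>k. OV k \<in> tvars t \<Longrightarrow> f k = g k) \<Longrightarrow> oren f t = oren g t"
proof (induction t)
  case (Var x) then show ?case by (cases x) auto
qed auto

lemma subst_oren:
  assumes "\<forall>x\<in>tvars t. \<not> O_var x"
  shows "subst (map_option (oren z) \<circ> \<theta>) t = oren z (subst \<theta> t)"
  using assms
proof (induction t)
  case (Var x) then show ?case by (cases "\<theta> x"; cases x) auto
qed auto

lemma length_oren_seq [simp]: "length (oren_seq z s) = length s"
  by (simp add: oren_seq_def)

lemma nth_oren_seq [simp]:
  "i < length s \<Longrightarrow> oren_seq z s ! i = (s!i)\<lparr>oins := map (oren z) (oins (s!i))\<rparr>"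
  by (simp add: oren_seq_def)

lemma oren_seq_append [simp]: "oren_seq z (s @ t) = oren_seq z s @ oren_seq z t"
  by (simp add: oren_seq_def)

lemma oren_seq_Cons [simp]: "oren_seq z (x # s) = x\<lparr>oins := map (oren z) (oins x)\<rparr> # oren_seq z s"
  by (simp add: oren_seq_def)

lemma oren_seq_Nil [simp]: "oren_seq z [] = []"
  by (simp add: oren_seq_def)

lemma oren_seq_comp: "oren_seq f (oren_seq g s) = oren_seq (f \<circ> g) s"
  by (simp add: oren_seq_def oren_comp comp_def)

lemma oren_seq_cong:
  assumes "\<And>x t k. x \<in> set s \<Longrightarrow> t \<in> set (oins x) \<Longrightarrow> OV k \<in> tvars t \<Longrightarrow> f k = g k"
  shows "oren_seq f s = oren_seq g s"
proof -
  have "map (oren f) (oins x) = map (oren g) (oins x)" if "x \<in> set s" for x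
    using assms that by (auto intro!: map_cong oren_cong)
  then show ?thesis unfolding oren_seq_def by (auto intro!: map_cong)
qed

lemma oinsts_oren_seq: "oinsts A (oren_seq z s) = map (oren z) (oinsts A s)"
  by (induction s) (auto simp: oinsts_def)

definition justified_occ :: "'m arena \<Rightarrow> 'm occ list \<Rightarrow> nat \<Rightarrow> bool" where
  "justified_occ A s i \<longleftrightarrow>
        omv (s!i) \<in> amoves A
      \<and> (if apar A (omv (s!i)) = None then olp (s!i) = None
         else (\<exists>j<i. olp (s!i) = Some j \<and> apar A (omv (s!i)) = Some (omv (s!j))))
      \<and> length (omp (s!i)) = length (aatl A (omv (s!i)))
      \<and> (\<forall>k<length (omp (s!i)). \<forall>j l. omp (s!i) ! k = Some (j, l) \<longrightarrow>
            j < i \<and> l < length (aatl A (omv (s!j)))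
            \<and> O_move A (omv (s!j)) \<noteq> O_move A (omv (s!i)))
      \<and> length (oins (s!i)) = length (afol A (omv (s!i)))
      \<and> (if O_move A (omv (s!i)) then (\<forall>t\<in>set (oins (s!i)). \<exists>k. t = Var (OV k))
         else (\<forall>t\<in>set (oins (s!i)). OP_term t))"

lemma justified_iff_occ:
  "justified A s \<longleftrightarrow> (\<forall>i<length s. justified_occ A s i) \<and> distinct (oinsts A s)"
  unfolding justified_def justified_occ_def ..

(* The conditions only look at moves, pointers and the shape of instantiations, all of which
   are preserved by renaming. *)
lemma justified_occ_oren:
  "justified_occ A s i \<Longrightarrow> i < length s \<Longrightarrow> justified_occ A (oren_seq z s) i"
  unfolding justified_occ_def by (auto simp: OP_term_oren split: if_splits)

(* Justified sequences are closed under injective renamings (injectivity keeps the played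
   O-variables distinct). *)
lemma justified_oren:
  "justified A s \<Longrightarrow> inj z \<Longrightarrow> justified A (oren_seq z s)"
  by (auto simp: justified_iff_occ oinsts_oren_seq distinct_map inj_on_subset[OF inj_oren]
      intro: justified_occ_oren)

context
  fixes A :: "'m arena" and s :: "'m occ list" and i :: nat
  assumes just: "justified A s" and i: "i < length s"
begin

lemma justified_move: "omv (s!i) \<in> amoves A"
  using just i unfolding justified_def by blast

lemma justified_olp_None: "olp (s!i) = None \<longleftrightarrow> apar A (omv (s!i)) = None"
  using just i unfolding justified_def by (metis option.distinct(1))

lemma justified_olp_Some:
  "olp (s!i) = Some j \<Longrightarrow> j < i \<and> apar A (omv (s!i)) = Some (omv (s!j))"
  using just i unfolding justified_def by (metis option.distinct(1) option.inject)

lemma justified_omp: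
  "k < length (omp (s!i)) \<Longrightarrow> omp (s!i) ! k = Some (j, l) \<Longrightarrow>
     j < i \<and> l < length (aatl A (omv (s!j)))"
  using just i unfolding justified_def by blast

lemma justified_omp_length: "length (omp (s!i)) = length (aatl A (omv (s!i)))"
  using just i unfolding justified_def by blast

lemma justified_O_inst:
  "O_move A (omv (s!i)) \<Longrightarrow> t \<in> set (oins (s!i)) \<Longrightarrow> \<exists>k. t = Var (OV k)"
  using just i unfolding justified_def by auto

end

lemma thaux_oren:
  assumes "justified A s" "i < length s"
  shows "thaux f A (oren_seq z s) i = map_option (oren z) \<circ> thaux f A s i"
  using assms(2)
proof (induction f arbitrary: i)
  case 0 then show ?case by (auto simp: fun_eq_iff)
next
  case (Suc f)
  have inst: "map_of (zip xs (map (oren z) ys)) = map_option (oren z) \<circ> map_of (zip xs ys)" for xs ys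
    by (simp add: zip_map2 map_of_map[symmetric] case_prod_beta)
  have prev: "(case olp (s!i) of None \<Rightarrow> Map.empty | Some j \<Rightarrow> thaux f A (oren_seq z s) j)
      = map_option (oren z) \<circ> (case olp (s!i) of None \<Rightarrow> Map.empty | Some j \<Rightarrow> thaux f A s j)"
    using Suc justified_olp_Some[OF assms(1) Suc.prems] by (auto split: option.split simp: fun_eq_iff)
  show ?case using Suc.prems
    by (simp add: prev inst fun_eq_iff map_add_def split: option.split)
qed

lemma theta_oren:
  "justified A s \<Longrightarrow> i < length s \<Longrightarrow> theta A (oren_seq z s) i = map_option (oren z) \<circ> theta A s i"
  unfolding theta_def by (rule thaux_oren)

lemma arena_atom_O_free:
  assumes "arena A" "m \<in> amoves A" "a \<in> set (aatl A m)" "t \<in> set (snd a)" "x \<in> tvars t"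
  shows "\<not> O_var x"
proof -
  have "AP_term t" using assms(1-4) unfolding arena_def by blast
  then show ?thesis using assms(5) unfolding AP_term_def by (cases x) auto
qed

lemma atom_subst_oren:
  assumes "arena A" "justified A s" "j < length s" "l < length (aatl A (omv (s!j)))"
  shows "map (subst (theta A (oren_seq z s) j)) (snd (aatl A (omv (s!j)) ! l))
       = map (oren z) (map (subst (theta A s j)) (snd (aatl A (omv (s!j)) ! l)))"
  using arena_atom_O_free[OF assms(1) justified_move[OF assms(2,3)] nth_mem[OF assms(4)]]
  by (simp add: theta_oren[OF assms(2,3)] subst_oren)

definition mu_match :: "'m arena \<Rightarrow> 'm occ list \<Rightarrow> nat \<Rightarrow> nat \<Rightarrow> nat \<Rightarrow> nat \<Rightarrow> bool" where
  "mu_match A s i k j l \<longleftrightarrow>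
        fst (aatl A (omv (s!i)) ! k) = fst (aatl A (omv (s!j)) ! l)
      \<and> length (snd (aatl A (omv (s!i)) ! k)) = length (snd (aatl A (omv (s!j)) ! l))
      \<and> map (subst (theta A s i)) (snd (aatl A (omv (s!i)) ! k))
          = map (subst (theta A s j)) (snd (aatl A (omv (s!j)) ! l))"

definition play_occ :: "'m arena \<Rightarrow> 'm occ list \<Rightarrow> nat \<Rightarrow> bool" where
  "play_occ A s i \<longleftrightarrow>
        (Suc i < length s \<longrightarrow> O_move A (omv (s!i)) \<noteq> O_move A (omv (s!Suc i)))
      \<and> (O_move A (omv (s!i)) \<longrightarrow> (\<forall>p\<in>set (omp (s!i)). p = None))
      \<and> (\<not> O_move A (omv (s!i)) \<longrightarrow> (\<forall>p\<in>set (omp (s!i)). p \<noteq> None))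
      \<and> (\<forall>k<length (omp (s!i)). \<forall>j l. omp (s!i) ! k = Some (j, l) \<longrightarrow> mu_match A s i k j l)
      \<and> (\<not> O_move A (omv (s!i)) \<longrightarrow>
           (\<forall>t\<in>set (oins (s!i)). \<forall>k. OV k \<in> tvars t \<longrightarrow>
              (\<exists>j<i. O_move A (omv (s!j)) \<and> Var (OV k) \<in> set (oins (s!j)))))"

lemma play_iff_occ: "play A s \<longleftrightarrow> justified A s \<and> (\<forall>i<length s. play_occ A s i)"
  unfolding play_def play_occ_def mu_match_def by (auto dest: Suc_lessD)

(* Matching of atoms survives renaming, since instantiated atoms are renamed uniformly. *)
lemma mu_match_oren:
  assumes "arena A" "justified A s" "i < length s" "k < length (omp (s!i))" "omp (s!i) ! k = Some (j, l)"
    and "mu_match A s i k j l"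
  shows "mu_match A (oren_seq z s) i k j l"
proof -
  have j: "j < i" "l < length (aatl A (omv (s!j)))" using justified_omp[OF assms(2-5)] by auto
  have k: "k < length (aatl A (omv (s!i)))" using assms(4) justified_omp_length[OF assms(2,3)] by simp
  show ?thesis using assms(3,6) j
    by (simp add: mu_match_def atom_subst_oren[OF assms(1,2)] k)
qed

lemma play_occ_oren:
  assumes "arena A" "justified A s" "i < length s" "play_occ A s i"
  shows "play_occ A (oren_seq z s) i"
proof -
  have played: "\<exists>j<i. O_move A (omv (oren_seq z s ! j)) \<and> Var (OV k) \<in> set (oins (oren_seq z s ! j))"
    if P: "\<not> O_move A (omv (s!i))" and t: "t \<in> set (oins (oren_seq z s ! i))"
      and k: "OV k \<in> tvars t" for t k
  proof -
    obtain t0 where t0: "t0 \<in> set (oins (s!i))" "t = oren z t0" using t assms(3) by auto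
    then obtain k0 where k0: "k = z k0" "OV k0 \<in> tvars t0" using OV_in_tvars_oren k by blast
    then obtain j where "j < i" "O_move A (omv (s!j))" "Var (OV k0) \<in> set (oins (s!j))"
      using assms(4) P t0 unfolding play_occ_def by blast
    then show ?thesis using assms(3) k0(1) by (auto intro!: exI[of _ j] rev_image_eqI)
  qed
  show ?thesis
    using assms played mu_match_oren[OF assms(1-3)] unfolding play_occ_def by auto
qed

lemma play_oren: "arena A \<Longrightarrow> play A s \<Longrightarrow> inj z \<Longrightarrow> play A (oren_seq z s)"
  by (simp add: play_iff_occ justified_oren play_occ_oren)

lemma play_justified: "play A s \<Longrightarrow> justified A s"
  by (simp add: play_iff_occ)

lemma play_occ_nth: "play A s \<Longrightarrow> i < length s \<Longrightarrow> play_occ A s i"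
  by (simp add: play_iff_occ)

lemma play_Nil: "play A []"
  by (simp add: play_def justified_def oinsts_def)

(* In a play the first move is initial and polarities alternate, so O plays at even positions. *)
lemma O_move_parity:
  assumes "play A s"
  shows "i < length s \<Longrightarrow> O_move A (omv (s!i)) \<longleftrightarrow> even i"
proof (induction i)
  case 0
  have just: "justified A s" using assms by (rule play_justified)
  have "olp (s!0) = None"
    using justified_olp_Some[OF just 0] by (cases "olp (s!0)") auto
  then have "has_depth A (omv (s!0)) 0"
    using justified_olp_None[OF just 0] by (simp add: has_depth.root)
  then show ?case unfolding O_move_def by auto
next
  case (Suc i)
  then have "O_move A (omv (s!i)) \<noteq> O_move A (omv (s!Suc i))"
    using play_occ_nth[OF assms, of i] Suc.prems by (simp add: play_occ_def)
  then show ?case using Suc by auto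
qed

lemma set_oinsts: "t \<in> set (oinsts A s) \<longleftrightarrow> (\<exists>x\<in>set s. O_move A (omv x) \<and> t \<in> set (oins x))"
  by (auto simp: oinsts_def)

lemma play_OV_played:
  assumes p: "play A s" and x: "x \<in> set s" and t: "t \<in> set (oins x)" and k: "OV k \<in> tvars t"
  shows "Var (OV k) \<in> set (oinsts A s)"
proof -
  obtain i where i: "i < length s" "s!i = x" using x by (meson in_set_conv_nth)
  have just: "justified A s" using p by (rule play_justified)
  show ?thesis
  proof (cases "O_move A (omv x)")
    case True
    then obtain k' where "t = Var (OV k')" using justified_O_inst[OF just i(1)] i(2) t by blast
    then show ?thesis using True x t k set_oinsts by fastforce
  next
    case False
    then obtain j where "j < i" "O_move A (omv (s!j))" "Var (OV k) \<in> set (oins (s!j))"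
      using play_occ_nth[OF p i(1)] i(2) t k unfolding play_occ_def by blast
    then show ?thesis using i(1) set_oinsts by (metis nth_mem order.strict_trans)
  qed
qed

lemma pvaux_bound: "i \<in> set (pvaux f A s n) \<Longrightarrow> i < n"
proof (induction f arbitrary: n i)
  case 0 then show ?case by simp
next
  case (Suc f)
  then show ?case by (cases n) (auto split: if_splits option.splits, fastforce+)
qed

lemma pvaux_cong:
  "(\<And>k. k < n \<Longrightarrow> omv (s!k) = omv (t!k) \<and> olp (s!k) = olp (t!k)) \<Longrightarrow> pvaux f A s n = pvaux f A t n"
proof (induction f arbitrary: n)
  case 0 then show ?case by simp
next
  case (Suc f)
  then show ?case by (cases n) (auto split: option.split)
qed

definition reidx_mu :: "nat list \<Rightarrow> (nat \<times> nat) option \<Rightarrow> (nat \<times> nat) option" where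
  "reidx_mu I p = (case p of None \<Rightarrow> None | Some (j, l) \<Rightarrow> if j \<in> set I then Some (pos I j, l) else None)"

lemma reidx_sel [simp]:
  "omv (reidx I x) = omv x" "oins (reidx I x) = oins x"
  "omp (reidx I x) = map (reidx_mu I) (omp x)"
  "olp (reidx I x) = (case olp x of None \<Rightarrow> None | Some j \<Rightarrow> if j \<in> set I then Some (pos I j) else None)"
  by (simp_all add: reidx_def reidx_mu_def)

lemma reidx_oins_upd: "reidx I (x\<lparr>oins := v\<rparr>) = (reidx I x)\<lparr>oins := v\<rparr>"
  by (simp add: reidx_def)

lemma preview_oren: "preview A (oren_seq z s) = oren_seq z (preview A s)"
proof -
  let ?I = "pvaux (length s) A s (length s)"
  have I: "pvaux (length s) A (oren_seq z s) (length s) = ?I"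
    by (rule pvaux_cong) simp
  have "i \<in> set ?I \<Longrightarrow> i < length s" for i by (rule pvaux_bound)
  then show ?thesis
    unfolding preview_def subseq_at_def oren_seq_def[of z "map _ _"] using I
    by (simp add: reidx_oins_upd)
qed

lemma set_preview: "x \<in> set (preview A s) \<Longrightarrow> \<exists>i<length s. omv x = omv (s!i) \<and> oins x = oins (s!i)"
  unfolding preview_def subseq_at_def using pvaux_bound by fastforce

lemma preview_snoc_P:
  fixes t :: "'m occ list" and b :: "'m occ"
  assumes "\<not> O_move A (omv b)"
  defines "J \<equiv> pvaux (length t) A t (length t)"
  shows "preview A (t @ [b]) = map (\<lambda>i. reidx (J @ [length t]) (t!i)) J @ [reidx (J @ [length t]) b]"
proof -
  have c: "pvaux (length t) A (t @ [b]) (length t) = J"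
    unfolding J_def by (rule pvaux_cong) (simp add: nth_append)
  have p: "pvaux (length (t @ [b])) A (t @ [b]) (length (t @ [b])) = J @ [length t]"
    using assms c by simp
  have "i \<in> set J \<Longrightarrow> (t @ [b]) ! i = t ! i" for i
    using pvaux_bound[of i "length t" A t "length t"] by (simp add: J_def nth_append)
  then show ?thesis unfolding preview_def p subseq_at_def by simp
qed

lemma pos_less: "k \<in> set vs \<Longrightarrow> pos vs k < length vs"
  by (induction vs) (auto simp: pos_def)

lemma pos_nth: "k \<in> set vs \<Longrightarrow> vs ! pos vs k = k"
  by (induction vs) (auto simp: pos_def)

lemma pos_map: "inj z \<Longrightarrow> pos (map z vs) (z k) = pos vs k"
proof -
  assume "inj z"
  then have "(\<lambda>x. x \<noteq> z k) \<circ> z = (\<lambda>x. x \<noteq> k)" by (auto simp: inj_eq)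
  then show ?thesis unfolding pos_def by (simp add: takeWhile_map)
qed

lemma view_ren_inj: "inj (view_ren vs)"
proof (rule injI)
  fix x y assume "view_ren vs x = view_ren vs y"
  then show "x = y" unfolding view_ren_def
    by (metis add_diff_cancel_left' le_add1 not_less pos_less pos_nth)
qed

lemma view_ren_map: "inj z \<Longrightarrow> k \<in> set vs \<Longrightarrow> view_ren (map z vs) (z k) = view_ren vs k"
  by (simp add: view_ren_def pos_map)

lemma OV_in_oidx: "Var (OV k) \<in> set (oinsts A P) \<Longrightarrow> k \<in> set (oidx A P)"
  unfolding oidx_def by force

lemma oidx_oren:
  assumes "\<forall>t\<in>set (oinsts A P). \<exists>k. t = Var (OV k)"
  shows "oidx A (oren_seq z P) = map z (oidx A P)"
  using assms unfolding oidx_def oinsts_oren_seq by auto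

lemma preview_O_insts:
  assumes "justified A s" "t \<in> set (oinsts A (preview A s))"
  shows "\<exists>k. t = Var (OV k)"
proof -
  obtain x where x: "x \<in> set (preview A s)" "O_move A (omv x)" "t \<in> set (oins x)"
    using assms(2) set_oinsts by metis
  then obtain i where "i < length s" "omv x = omv (s!i)" "oins x = oins (s!i)"
    using set_preview by blast
  then show ?thesis using justified_O_inst[OF assms(1)] x by auto
qed

lemma renamed_play_OV:
  assumes p: "play A (oren_seq \<rho> P)" and \<rho>: "inj \<rho>"
    and x: "x \<in> set P" and t: "t \<in> set (oins x)" and k: "OV k \<in> tvars t"
  shows "k \<in> set (oidx A P)"
proof -
  have "x\<lparr>oins := map (oren \<rho>) (oins x)\<rparr> \<in> set (oren_seq \<rho> P)"
    using x by (simp add: oren_seq_def)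
  moreover have "OV (\<rho> k) \<in> tvars (oren \<rho> t)" using k by (force simp: tvars_oren)
  ultimately have "Var (OV (\<rho> k)) \<in> set (map (oren \<rho>) (oinsts A P))"
    using play_OV_played[OF p] t by (fastforce simp: oinsts_oren_seq)
  then obtain u where "u \<in> set (oinsts A P)" "oren \<rho> u = Var (OV (\<rho> k))" by auto
  moreover from this(2) obtain k' where "u = Var (OV k')" "\<rho> k = \<rho> k'" using oren_eq_OV by blast
  ultimately show ?thesis using \<rho> by (auto dest: injD intro: OV_in_oidx)
qed

(* Invariance of views: renaming a justified sequence whose view is a play does not change the
   view, because the canonical renaming of the view absorbs the renaming z. *)
lemma view_of_oren:
  assumes just: "justified A s" and view: "play A (view_of A s)" and z: "inj z"
  shows "view_of A (oren_seq z s) = view_of A s"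
proof -
  define P where "P = preview A s"
  define vs where "vs = oidx A P"
  have V: "view_of A s = oren_seq (view_ren vs) P" by (simp add: view_of_def P_def vs_def)
  have played: "k \<in> set vs" if "x \<in> set P" "t \<in> set (oins x)" "OV k \<in> tvars t" for x t k
    using renamed_play_OV[OF view[unfolded V] view_ren_inj that] by (simp add: vs_def)
  have "view_of A (oren_seq z s) = oren_seq (view_ren (map z vs)) (oren_seq z P)"
    using preview_O_insts[OF just]
    by (simp add: view_of_def preview_oren oidx_oren P_def vs_def)
  also have "\<dots> = oren_seq (view_ren (map z vs) \<circ> z) P" by (rule oren_seq_comp)
  also have "\<dots> = oren_seq (view_ren vs) P"
    by (rule oren_seq_cong) (simp add: view_ren_map[OF z] played)
  finally show ?thesis using V by simp
qed

lemma view_of_snoc_P: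
  fixes A :: "'m arena" and t :: "'m occ list"
  shows "\<exists>V I \<zeta>. inj \<zeta> \<and> (\<forall>b. \<not> O_move A (omv b) \<longrightarrow>
      view_of A (t @ [b]) = V @ [(reidx I b)\<lparr>oins := map (oren \<zeta>) (oins b)\<rparr>])"
proof (intro exI conjI allI impI)
  define J where "J = pvaux (length t) A t (length t)"
  define P0 where "P0 = map (\<lambda>i. reidx (J @ [length t]) (t!i)) J"
  show "inj (view_ren (oidx A P0))" by (rule view_ren_inj)
  fix b :: "'m occ" assume "\<not> O_move A (omv b)"
  then show "view_of A (t @ [b]) = oren_seq (view_ren (oidx A P0)) P0
      @ [(reidx (J @ [length t]) b)\<lparr>oins := map (oren (view_ren (oidx A P0))) (oins b)\<rparr>]"
    by (simp add: view_of_def preview_snoc_P J_def P0_def oidx_def oinsts_def oren_seq_def reidx_oins_upd)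
qed

lemma pos_inj: "j \<in> set I \<Longrightarrow> j' \<in> set I \<Longrightarrow> pos I j = pos I j' \<Longrightarrow> j = j'"
  by (metis pos_nth)

lemma reidx_mu_inj: "reidx_mu I p = reidx_mu I q \<Longrightarrow> reidx_mu I p \<noteq> None \<Longrightarrow> p = q"
  unfolding reidx_mu_def by (auto split: option.splits if_splits intro: pos_inj)

lemma reidx_inj:
  assumes eq: "reidx I b = reidx I d"
    and roots: "olp b = None \<longleftrightarrow> olp d = None"
    and lp_kept: "olp b \<noteq> None \<Longrightarrow> olp (reidx I b) \<noteq> None"
    and mp_kept: "\<forall>p\<in>set (omp (reidx I b)). p \<noteq> None"
  shows "b = d"
proof -
  have mv: "omv b = omv d" and ins: "oins b = oins d"
    using arg_cong[OF eq, of omv] arg_cong[OF eq, of oins] by simp_all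
  have lp: "olp b = olp d"
  proof (cases "olp b")
    case (Some j)
    with roots obtain j' where j': "olp d = Some j'" by auto
    have j: "j \<in> set I" using lp_kept Some by (auto split: if_splits)
    have "olp (reidx I d) = Some (pos I j)" using arg_cong[OF eq, of olp] Some j by simp
    then have "j' \<in> set I" "pos I j' = pos I j" using j' by (auto split: if_splits)
    then show ?thesis using pos_inj[OF j] Some j' by metis
  qed (use roots in simp)
  have mps: "map (reidx_mu I) (omp b) = map (reidx_mu I) (omp d)" using arg_cong[OF eq, of omp] by simp
  then have len: "length (omp b) = length (omp d)" by (metis length_map)
  have mp: "omp b = omp d"
  proof (rule nth_equalityI[OF len])
    fix k assume k: "k < length (omp b)"
    have "reidx_mu I (omp b ! k) = reidx_mu I (omp d ! k)" using mps k len by (metis nth_map)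
    moreover have "reidx_mu I (omp b ! k) \<noteq> None" using mp_kept k by simp
    ultimately show "omp b ! k = omp d ! k" by (rule reidx_mu_inj)
  qed
  show ?thesis using mv ins lp mp by (intro occ.equality) simp_all
qed

lemma view_determines_P_move:
  assumes vf: "view_function A \<sigma>"
    and pb: "play A (t @ [b])" and pd: "play A (t @ [d])"
    and vb: "view_of A (t @ [b]) \<in> \<sigma>" and vd: "view_of A (t @ [d]) \<in> \<sigma>"
    and nb: "\<not> O_move A (omv b)" and nd: "\<not> O_move A (omv d)"
  shows "b = d"
proof -
  obtain V I \<zeta> where \<zeta>: "inj \<zeta>" and V: "\<And>b. \<not> O_move A (omv b) \<Longrightarrow>
      view_of A (t @ [b]) = V @ [(reidx I b)\<lparr>oins := map (oren \<zeta>) (oins b)\<rparr>]"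
    using view_of_snoc_P by blast
  define yb where "yb = (reidx I b)\<lparr>oins := map (oren \<zeta>) (oins b)\<rparr>"
  define yd where "yd = (reidx I d)\<lparr>oins := map (oren \<zeta>) (oins d)\<rparr>"
  have in_\<sigma>: "V @ [yb] \<in> \<sigma>" "V @ [yd] \<in> \<sigma>"
    using V[OF nb] V[OF nd] vb vd by (simp_all add: yb_def yd_def)
  then have "yb = yd" using vf unfolding view_function_def by blast
  have pV: "play A (V @ [yb])" using vf in_\<sigma>(1) unfolding view_function_def is_view_def by blast
  have last: "length V < length (V @ [yb])" "(V @ [yb]) ! length V = yb" by simp_all
  have "oins b = oins d"
    using arg_cong[OF \<open>yb = yd\<close>, of oins] inj_oren[OF \<zeta>]
    by (simp add: yb_def yd_def inj_map_eq_map)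
  moreover have "reidx I b = yb\<lparr>oins := oins b\<rparr>" "reidx I d = yd\<lparr>oins := oins d\<rparr>"
    by (simp_all add: yb_def yd_def)
  ultimately have eq: "reidx I b = reidx I d" using \<open>yb = yd\<close> by simp
  have mv: "omv b = omv d" using arg_cong[OF eq, of omv] by simp
  have roots: "olp b = None \<longleftrightarrow> olp d = None"
    using justified_olp_None[OF play_justified[OF pb], of "length t"]
      justified_olp_None[OF play_justified[OF pd], of "length t"] mv by simp
  have lp_kept: "olp (reidx I b) \<noteq> None" if "olp b \<noteq> None"
    using that justified_olp_None[OF play_justified[OF pb], of "length t"]
      justified_olp_None[OF play_justified[OF pV] last(1)] last(2)
    by (auto simp: yb_def)
  have mp_kept: "\<forall>p\<in>set (omp (reidx I b)). p \<noteq> None"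
    using play_occ_nth[OF pV last(1)] nb by (simp add: last(2) play_occ_def yb_def)
  show ?thesis using reidx_inj[OF eq roots lp_kept mp_kept] .
qed

lemma vclos_play: "s \<in> vclos A \<sigma> \<Longrightarrow> play A s \<and> even (length s)"
  by (induction rule: vclos.induct) (auto simp: play_Nil)

lemma vclos_take: "s \<in> vclos A \<sigma> \<Longrightarrow> even k \<Longrightarrow> k \<le> length s \<Longrightarrow> take k s \<in> vclos A \<sigma>"
proof (induction arbitrary: k rule: vclos.induct)
  case empty then show ?case by (simp add: vclos.empty)
next
  case (ext s m n)
  have "even (length s)" using vclos_play[OF ext.hyps(1)] by simp
  moreover have "k \<le> length s + 2" using ext.prems(2) by simp
  ultimately have "k \<le> length s \<or> k = length s + 2" using ext.prems(1) by presburger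
  then show ?case
  proof
    assume "k \<le> length s"
    then show ?case using ext.IH ext.prems(1) by simp
  next
    assume "k = length s + 2"
    then show ?case using vclos.ext[OF ext.hyps] by simp
  qed
qed

lemma vclos_snoc:
  assumes "s @ [m] \<in> vclos A \<sigma>"
  shows "play A (s @ [m]) \<and> view_of A (s @ [m]) \<in> \<sigma> \<and> odd (length s)"
  using assms
proof (cases rule: vclos.cases)
  case (ext s' a b)
  then show ?thesis using vclos_play[of s' A \<sigma>] by auto
qed simp

(* Determinism: both extensions end with P-moves by parity, and these have the same view. *)
lemma vclos_deterministic:
  assumes vf: "view_function A \<sigma>" and m: "s @ [m] \<in> vclos A \<sigma>" and n: "s @ [n] \<in> vclos A \<sigma>"
  shows "m = n"
proof -
  have P_move: "\<not> O_move A (omv x)" if "s @ [x] \<in> vclos A \<sigma>" for x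
    using vclos_snoc[OF that] O_move_parity[of A "s @ [x]" "length s"] by simp
  from vclos_snoc[OF m] vclos_snoc[OF n]
  have "play A (s @ [m])" "play A (s @ [n])" "view_of A (s @ [m]) \<in> \<sigma>" "view_of A (s @ [n]) \<in> \<sigma>"
    by simp_all
  then show ?thesis by (rule view_determines_P_move[OF vf _ _ _ _ P_move[OF m] P_move[OF n]])
qed

(* Uniformity: renaming an extension step gives an extension step, since plays are closed
   under renaming and the view is unchanged. *)
lemma vclos_uniform:
  assumes ar: "arena A" and vf: "view_function A \<sigma>" and z: "inj z"
  shows "s \<in> vclos A \<sigma> \<Longrightarrow> oren_seq z s \<in> vclos A \<sigma>"
proof (induction rule: vclos.induct)
  case empty then show ?case by (simp add: vclos.empty)
next
  case (ext s m n)
  have "is_view A (view_of A (s @ [m, n]))" using vf ext.hyps(3) unfolding view_function_def by blast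
  then have "view_of A (oren_seq z (s @ [m, n])) = view_of A (s @ [m, n])"
    using view_of_oren[OF play_justified[OF ext.hyps(2)] _ z] unfolding is_view_def by blast
  then show ?case
    using vclos.ext[OF ext.IH, of "m\<lparr>oins := map (oren z) (oins m)\<rparr>" "n\<lparr>oins := map (oren z) (oins n)\<rparr>"]
      play_oren[OF ar ext.hyps(2) z] ext.hyps(3) by simp
qed

theorem mainTheorem7:
  fixes A :: "'m arena" and \<sigma> :: "'m occ list set"
  assumes "arena A" and "view_function A \<sigma>"
  shows "strategy A (vclos A \<sigma>)"
  unfolding strategy_def
proof (intro conjI allI ballI impI)
  show "vclos A \<sigma> \<noteq> {}" using vclos.empty by blast
next
  fix s assume "s \<in> vclos A \<sigma>"
  then show "play A s" and "even (length s)" using vclos_play by blast+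
next
  fix s k assume "s \<in> vclos A \<sigma>" "even k \<and> k \<le> length s"
  then show "take k s \<in> vclos A \<sigma>" using vclos_take by blast
next
  fix s m n assume "s @ [m] \<in> vclos A \<sigma> \<and> s @ [n] \<in> vclos A \<sigma>"
  then show "m = n" using vclos_deterministic[OF assms(2)] by blast
next
  fix z :: "nat \<Rightarrow> nat" and s assume "inj z \<and> s \<in> vclos A \<sigma>"
  then show "oren_seq z s \<in> vclos A \<sigma>" using vclos_uniform[OF assms] by blast
qed

end
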